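(* For all integers $m\ge1$, $n>2m$ and all $\sigma_1^2,\dots,\sigma_n^2>0$, letting $L\subset G^{r}$ with $|L|=2m$ consist of $2m$ arms of $G^{r}$ with the largest variances, we have $\frac{\sum_{i\in L}\sigma_i^2}{\sum_{j\in G^{r}}\sigma_j^2}\ge\frac13$ and \[ \Big(1-\frac{\sum_{i\in L}\sigma_i^2}{\sum_{j\in G^{r}}\sigma_j^2}\Big)\ln(m)\le 4\,\mathrm{Ent}(\sigma^2_L). \]
   Context: For a positive vector $a$, $\mathrm{Ent}(a)=-\sum_i\hat a_i\ln\hat a_i$ with $\hat a_i=a_i/\sum_ja_j$; $\sigma^2_S=(\sigma_i^2)_{i\in S}$. Let $\underline\sigma^2=\min_i\sigma_i^2$, $G_j=\{i\in[n]:2^{j-1}\le\sigma_i^2/\underline\sigma^2<2^j\}$ for $j=1,\dots,k$ covering $[n]$. $G'_j=G_j$ if $|G_j|\le2m$, otherwise $G'_j\subset G_j$ with $|G'_j|=2m$; $G^{r}=\bigcup_jG'_j$, the choices made to maximize $\mathrm{Ent}(\sigma^2_{G^{r}})$. *)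

theory Defs
  imports Complex_Main
begin

definition Ent :: "(nat \<Rightarrow> real) \<Rightarrow> nat set \<Rightarrow> real" where
  "Ent a S = - (\<Sum>i\<in>S. (a i / (\<Sum>j\<in>S. a j)) * ln (a i / (\<Sum>j\<in>S. a j)))"

definition min_var :: "nat \<Rightarrow> (nat \<Rightarrow> real) \<Rightarrow> real" where
  "min_var n s = Min (s ` {1..n})"

definition grp :: "nat \<Rightarrow> (nat \<Rightarrow> real) \<Rightarrow> nat \<Rightarrow> nat set" where
  "grp n s j = {i \<in> {1..n}. 2 ^ (j - 1) \<le> s i / min_var n s \<and> s i / min_var n s < 2 ^ j}"

text \<open>Gr is an admissible reduced set: a union over j >= 1 of sets G'_j, where
  G'_j = G_j if |G_j| <= 2m, and otherwise G'_j is a subset of G_j of size 2m.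
  (Groups with index beyond the covering index k are empty, so taking the union
  over all j >= 1 is the same as over j = 1..k.)\<close>
definition admissible_reduced :: "nat \<Rightarrow> nat \<Rightarrow> (nat \<Rightarrow> real) \<Rightarrow> nat set \<Rightarrow> bool" where
  "admissible_reduced m n s Gr \<longleftrightarrow>
     (\<exists>G' :: nat \<Rightarrow> nat set.
        (\<forall>j\<ge>1. (card (grp n s j) \<le> 2 * m \<longrightarrow> G' j = grp n s j) \<and>
                (2 * m < card (grp n s j) \<longrightarrow> G' j \<subseteq> grp n s j \<and> card (G' j) = 2 * m)) \<and>
        Gr = (\<Union>j\<in>{1..}. G' j))"

definition is_Gr :: "nat \<Rightarrow> nat \<Rightarrow> (nat \<Rightarrow> real) \<Rightarrow> nat set \<Rightarrow> bool" where
  "is_Gr m n s Gr \<longleftrightarrow> admissible_reduced m n s Gr \<and>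
     (\<forall>H. admissible_reduced m n s H \<longrightarrow> Ent s H \<le> Ent s Gr)"

end

theory Submission
  imports Defs
begin

(*
  Let t be the smallest variance in L and G_j the dyadic group containing it. Arms of G^r outside L
  have variance at most t. Those of variance at least 2^(j-1) min lie in G_j, where they share the at
  most 2m places of G'_j with L \<inter> G_j; the others lie in the groups below j, whose total weight is a
  geometric sum of at most 4m 2^(j-1) min. Since the arms of L outside G_j have variance at least
  2^j min, the rest of G^r weighs at most twice L, and at most 6mt.

  For the entropy, every normalized weight of L is at least q = t / (\<Sum>L) \<le> 1/(2m), at most two of
  them exceed 1/e, and -x ln x increases on (0, 1/e]; hence Ent(L) \<ge> (2m - 2) q ln(1/q), which
  dominates (6mq/4) ln m because ln(1/q) \<ge> ln(2m).
*)

section \<open>Entropy of weights bounded from below\<close>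

lemma neg_mult_ln_nonneg:
  fixes p :: real
  assumes "0 \<le> p" "p \<le> 1"
  shows "0 \<le> - (p * ln p)"
proof (cases "p = 0")
  case False
  then have "ln p \<le> 0"
    using assms by simp
  then show ?thesis
    using assms by (simp add: mult_nonneg_nonpos)
qed simp

lemma neg_mult_ln_mono:
  fixes p q :: real
  assumes "0 < q" "q \<le> p" "p \<le> exp (-1)"
  shows "- (q * ln q) \<le> - (p * ln p)"
proof -
  have "ln p \<le> -1"
    using assms by (metis exp_gt_zero order.strict_trans2 ln_exp ln_le_cancel_iff)
  then have "(p - q) * ln p \<le> (p - q) * (-1)"
    using assms(2) by (intro mult_left_mono) auto
  moreover have "q * ln (p / q) \<le> q * (p / q - 1)"
    using assms by (intro mult_left_mono ln_le_minus_one) auto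
  moreover have "ln (p / q) = ln p - ln q" "q * (p / q - 1) = p - q"
    using assms by (simp_all add: ln_div field_simps)
  ultimately show ?thesis by (simp add: algebra_simps)
qed

lemma card_exp_neg1_less_le_2:
  fixes p :: "'a \<Rightarrow> real"
  assumes "finite L" "\<And>i. i \<in> L \<Longrightarrow> 0 \<le> p i" "sum p L \<le> 1"
  shows "card {i \<in> L. exp (-1) < p i} \<le> 2"
proof (rule ccontr)
  let ?K = "{i \<in> L. exp (-1) < p i}"
  assume "\<not> card ?K \<le> 2"
  then have "?K \<noteq> {}" by (metis card.empty zero_le)
  have "1 \<le> 3 * exp (-1::real)"
    using exp_le by (simp add: exp_minus field_simps)
  also have "\<dots> \<le> real (card ?K) * exp (-1)"
    using \<open>\<not> card ?K \<le> 2\<close> by (intro mult_right_mono) auto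
  also have "\<dots> = (\<Sum>i\<in>?K. exp (-1))"
    by simp
  also have "\<dots> < sum p ?K"
    using assms(1) \<open>?K \<noteq> {}\<close> by (intro sum_strict_mono) auto
  also have "\<dots> \<le> sum p L"
    using assms by (intro sum_mono2) auto
  finally show False using assms(3) by linarith
qed

lemma card_diff_2_le_card_le_exp_neg1:
  fixes p :: "'a \<Rightarrow> real"
  assumes "finite L" "\<And>i. i \<in> L \<Longrightarrow> 0 \<le> p i" "sum p L \<le> 1"
  shows "card L - 2 \<le> card {i \<in> L. p i \<le> exp (-1)}"
proof -
  let ?K = "{i \<in> L. p i \<le> exp (-1)}"
  have "L - ?K = {i \<in> L. exp (-1) < p i}"
    by auto
  then have "card (L - ?K) \<le> 2"
    using card_exp_neg1_less_le_2[OF assms] by simp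
  then show ?thesis
    using card_Diff_subset[of ?K L] card_mono[of L ?K] assms(1) by auto
qed

lemma Ent_ge_card_mult_neg_mult_ln:
  assumes "finite L" "0 < t" "\<And>i. i \<in> L \<Longrightarrow> t \<le> s i"
  shows "real (card L - 2) * - (t / sum s L * ln (t / sum s L)) \<le> Ent s L"
proof (cases "L = {}")
  case True
  then show ?thesis by (simp add: Ent_def)
next
  case False
  define S where "S = sum s L"
  define q where "q = t / S"
  define p where "p i = s i / S" for i
  define K where "K = {i \<in> L. p i \<le> exp (-1)}"
  have s_le_S: "s i \<le> S" if "i \<in> L" for i
    unfolding S_def using assms that
    by (intro member_le_sum) (auto intro: order.trans[OF less_imp_le])
  obtain i where "i \<in> L"
    using False by blast
  then have "t \<le> S"
    using assms(3) s_le_S order.trans by blast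
  then have "0 < S" "0 < q" "q \<le> 1"
    using assms(2) by (simp_all add: q_def)
  have p: "q \<le> p i" "p i \<le> 1" if "i \<in> L" for i
    using assms(3) s_le_S that \<open>0 < S\<close> by (auto simp: p_def q_def divide_right_mono)
  have p_pos: "0 < p i" if "i \<in> L" for i
    using p(1)[OF that] \<open>0 < q\<close> by linarith
  have "sum p L \<le> 1"
    using \<open>0 < S\<close> by (simp add: p_def S_def flip: sum_divide_distrib)
  then have "card L - 2 \<le> card K"
    unfolding K_def using assms(1) p_pos by (intro card_diff_2_le_card_le_exp_neg1) (auto intro: less_imp_le)
  then have "real (card L - 2) * - (q * ln q) \<le> real (card K) * - (q * ln q)"
    using neg_mult_ln_nonneg[of q] \<open>0 < q\<close> \<open>q \<le> 1\<close> by (intro mult_right_mono) auto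
  also have "\<dots> \<le> (\<Sum>i\<in>K. - (p i * ln (p i)))"
    using p \<open>0 < q\<close> by (intro sum_bounded_below neg_mult_ln_mono) (auto simp: K_def)
  also have "\<dots> \<le> (\<Sum>i\<in>L. - (p i * ln (p i)))"
    using assms(1) p p_pos by (intro sum_mono2 neg_mult_ln_nonneg) (auto simp: K_def less_imp_le)
  also have "\<dots> = Ent s L"
    by (simp add: Ent_def p_def S_def sum_negf)
  finally show ?thesis by (simp add: q_def S_def)
qed

(* False for real m slightly above 1, e.g. m = 1.05. *)
lemma six_mult_ln_le:
  fixes m :: nat
  assumes "1 \<le> m"
  shows "6 * real m * ln (real m) \<le> (8 * real m - 8) * ln (2 * real m)"
proof -
  consider "m = 1" | "4 \<le> m" | "2 \<le> m" "m < 4"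
    using assms by linarith
  then have "(8 - 2 * real m) * ln (real m) \<le> (8 * real m - 8) * ln 2"
  proof cases
    case 2
    then have "(8 - 2 * real m) * ln (real m) \<le> 0"
      by (intro mult_nonpos_nonneg) auto
    also have "0 \<le> (8 * real m - 8) * ln 2"
      using assms by simp
    finally show ?thesis .
  next
    case 3
    then have "ln (real m) \<le> ln 4"
      by (subst ln_le_cancel_iff) auto
    also have "ln (4::real) = 2 * ln 2"
      using ln_realpow[of 2 2] by simp
    finally have "(8 - 2 * real m) * ln (real m) \<le> (8 - 2 * real m) * (2 * ln 2)"
      using 3 by (intro mult_left_mono) auto
    also have "\<dots> = (16 - 4 * real m) * ln 2"
      by simp
    also have "\<dots> \<le> (8 * real m - 8) * ln 2"
      using 3 by (intro mult_right_mono) auto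
    finally show ?thesis .
  qed simp
  then show ?thesis
    using assms by (simp add: ln_mult algebra_simps)
qed

lemma ln_mult_le_Ent:
  fixes m :: nat
  assumes "1 \<le> m" "finite L" "card L = 2 * m" "0 < t" "\<And>i. i \<in> L \<Longrightarrow> t \<le> s i"
  shows "6 * real m * (t / sum s L) * ln (real m) \<le> 4 * Ent s L"
proof -
  define q where "q = t / sum s L"
  have "2 * real m * t \<le> sum s L"
    using sum_bounded_below[of L t s] assms by simp
  moreover have "0 < 2 * real m * t"
    using assms by simp
  ultimately have "0 < sum s L"
    by linarith
  then have "0 < q" "2 * real m * q \<le> 1"
    using \<open>2 * real m * t \<le> sum s L\<close> assms(4) by (simp_all add: q_def pos_divide_le_eq)
  then have "ln (2 * real m) \<le> - ln q"
    using assms(1) ln_le_minus_one[of "2 * real m * q"] by (simp add: ln_mult)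
  have "6 * real m * q * ln (real m) = q * (6 * real m * ln (real m))"
    by simp
  also have "\<dots> \<le> q * ((8 * real m - 8) * ln (2 * real m))"
    using six_mult_ln_le[OF assms(1)] \<open>0 < q\<close> by (intro mult_left_mono) auto
  also have "\<dots> \<le> q * ((8 * real m - 8) * - ln q)"
    using \<open>ln (2 * real m) \<le> - ln q\<close> \<open>0 < q\<close> assms(1) by (intro mult_left_mono) auto
  also have "\<dots> = 4 * ((2 * real m - 2) * - (q * ln q))"
    by (simp add: algebra_simps)
  also have "\<dots> = 4 * (real (card L - 2) * - (q * ln q))"
    using assms(1,3) by (simp add: of_nat_diff)
  also have "\<dots> \<le> 4 * Ent s L"
  proof -
    have "real (card L - 2) * - (q * ln q) \<le> Ent s L"
      unfolding q_def using assms(2,4,5) by (rule Ent_ge_card_mult_neg_mult_ln)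
    then show ?thesis
      by linarith
  qed
  finally show ?thesis
    by (simp only: q_def)
qed

lemma one_minus_div_add_le:
  fixes S R :: real
  assumes "0 < S" "0 \<le> R"
  shows "1 - S / (S + R) \<le> R / S"
proof -
  have "1 - S / (S + R) = R / (S + R)"
    using assms by (simp add: field_simps)
  also have "\<dots> \<le> R / S"
    using assms by (intro divide_left_mono) auto
  finally show ?thesis .
qed

lemma one_minus_div_mult_ln_le_Ent:
  fixes m :: nat
  assumes "1 \<le> m" "finite L" "card L = 2 * m" "0 < t" "\<And>i. i \<in> L \<Longrightarrow> t \<le> s i"
    and "0 \<le> R" "R \<le> 6 * real m * t"
  shows "(1 - sum s L / (sum s L + R)) * ln (real m) \<le> 4 * Ent s L"
proof -
  have "real (card L) * t \<le> sum s L"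
    using assms(5) by (rule sum_bounded_below)
  moreover have "0 < real (card L) * t"
    using assms(1,3,4) by simp
  ultimately have "0 < sum s L"
    by linarith
  then have "1 - sum s L / (sum s L + R) \<le> R / sum s L"
    using assms(6) by (rule one_minus_div_add_le)
  also have "\<dots> \<le> 6 * real m * (t / sum s L)"
    using divide_right_mono[OF assms(7), of "sum s L"] \<open>0 < sum s L\<close> by simp
  finally have "(1 - sum s L / (sum s L + R)) * ln (real m) \<le> 6 * real m * (t / sum s L) * ln (real m)"
    using assms(1) by (intro mult_right_mono) auto
  also have "\<dots> \<le> 4 * Ent s L"
    using assms(1-5) by (rule ln_mult_le_Ent)
  finally show ?thesis .
qed

section \<open>Dyadic groups and admissible reduced sets\<close>

lemma grp_subset: "grp n s j \<subseteq> {1..n}"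
  by (auto simp: grp_def)

lemma grp_disjoint:
  assumes "i \<in> grp n s j" "i \<in> grp n s k"
  shows "j = k"
proof -
  have "\<not> j < k" if "i \<in> grp n s j" "i \<in> grp n s k" for j k
  proof
    assume "j < k"
    then have "(2::real) ^ j \<le> 2 ^ (k - 1)"
      by (intro power_increasing) auto
    moreover have "s i / min_var n s < 2 ^ j" "2 ^ (k - 1) \<le> s i / min_var n s"
      using that by (auto simp: grp_def)
    ultimately show False
      by linarith
  qed
  then show ?thesis
    using assms by (meson linorder_neqE_nat)
qed

lemma mem_grp_iff:
  assumes "0 < min_var n s"
  shows "i \<in> grp n s j \<longleftrightarrow>
    i \<in> {1..n} \<and> 2 ^ (j - 1) * min_var n s \<le> s i \<and> s i < 2 ^ j * min_var n s"
  using assms by (auto simp: grp_def pos_le_divide_eq pos_divide_less_eq)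

lemma min_var_pos:
  assumes "1 \<le> n" "\<And>i. i \<in> {1..n} \<Longrightarrow> 0 < s i"
  shows "0 < min_var n s"
  using assms by (auto simp: min_var_def Min_gr_iff)

lemma min_var_le: "i \<in> {1..n} \<Longrightarrow> min_var n s \<le> s i"
  unfolding min_var_def by (rule Min_le) auto

lemma admissible_reducedE:
  assumes "admissible_reduced m n s Gr"
  obtains G' where "\<And>j. 1 \<le> j \<Longrightarrow> G' j \<subseteq> grp n s j"
    and "\<And>j. 1 \<le> j \<Longrightarrow> card (G' j) \<le> 2 * m" and "Gr = (\<Union>j\<in>{1..}. G' j)"
proof -
  obtain G' where G': "\<forall>j\<ge>1. (card (grp n s j) \<le> 2 * m \<longrightarrow> G' j = grp n s j) \<and>
      (2 * m < card (grp n s j) \<longrightarrow> G' j \<subseteq> grp n s j \<and> card (G' j) = 2 * m)"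
    and "Gr = (\<Union>j\<in>{1..}. G' j)"
    using assms unfolding admissible_reduced_def by blast
  moreover have "G' j \<subseteq> grp n s j \<and> card (G' j) \<le> 2 * m" if "1 \<le> j" for j
    using G'[rule_format, OF that] by (cases "card (grp n s j) \<le> 2 * m") auto
  ultimately show ?thesis
    using that by blast
qed

lemma admissible_reduced_subset_grps:
  assumes "admissible_reduced m n s Gr"
  shows "Gr \<subseteq> (\<Union>j\<in>{1..}. grp n s j)"
proof -
  obtain G' where "\<And>j. 1 \<le> j \<Longrightarrow> G' j \<subseteq> grp n s j" "Gr = (\<Union>j\<in>{1..}. G' j)"
    using assms by (blast elim: admissible_reducedE)
  then show ?thesis
    by auto
qed

lemma admissible_reduced_subset_atLeastAtMost:
  assumes "admissible_reduced m n s Gr"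
  shows "Gr \<subseteq> {1..n}"
  using admissible_reduced_subset_grps[OF assms] grp_subset by blast

lemma admissible_reduced_card_Int_grp:
  assumes "admissible_reduced m n s Gr" "1 \<le> j"
  shows "card (Gr \<inter> grp n s j) \<le> 2 * m"
proof -
  obtain G' where G': "\<And>j. 1 \<le> j \<Longrightarrow> G' j \<subseteq> grp n s j"
    "\<And>j. 1 \<le> j \<Longrightarrow> card (G' j) \<le> 2 * m" and Gr: "Gr = (\<Union>j\<in>{1..}. G' j)"
    using assms(1) by (blast elim: admissible_reducedE)
  have "Gr \<inter> grp n s j \<subseteq> G' j"
  proof
    fix i assume "i \<in> Gr \<inter> grp n s j"
    then obtain k where "1 \<le> k" "i \<in> G' k" "i \<in> grp n s j"
      unfolding Gr by auto
    then have "k = j"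
      using G'(1) grp_disjoint by blast
    then show "i \<in> G' j"
      using \<open>i \<in> G' k\<close> by simp
  qed
  moreover have "finite (G' j)"
    using G'(1)[OF assms(2)] grp_subset by (meson finite_atLeastAtMost finite_subset)
  ultimately show ?thesis
    using card_mono G'(2)[OF assms(2)] order.trans by blast
qed

lemma admissible_reduced_pos:
  assumes "admissible_reduced m n s Gr" "0 < min_var n s" "i \<in> Gr"
  shows "0 < s i"
  using assms admissible_reduced_subset_atLeastAtMost min_var_le by (meson less_le_trans subsetD)

section \<open>Weight of the reduced set outside the top arms\<close>

lemma sum_power2_atLeastAtMost: "(\<Sum>j=1..k. (2::real) ^ j) = 2 ^ (k + 1) - 2"
  by (induction k) simp_all

lemma admissible_reduced_below_level_subset:
  assumes "admissible_reduced m n s Gr" "0 < min_var n s"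
  shows "{i \<in> Gr. s i < 2 ^ k * min_var n s} \<subseteq> (\<Union>j\<in>{1..k}. Gr \<inter> grp n s j)"
proof
  fix i assume i: "i \<in> {i \<in> Gr. s i < 2 ^ k * min_var n s}"
  then obtain j where j: "1 \<le> j" "i \<in> grp n s j"
    using admissible_reduced_subset_grps[OF assms(1)] by blast
  then have "2 ^ (j - 1) * min_var n s < 2 ^ k * min_var n s"
    using i mem_grp_iff[OF assms(2)] by fastforce
  then have "j - 1 < k"
    using assms(2) by simp
  then show "i \<in> (\<Union>j\<in>{1..k}. Gr \<inter> grp n s j)"
    using i j by auto
qed

lemma admissible_reduced_sum_below_level:
  assumes "admissible_reduced m n s Gr" "0 < min_var n s"
  shows "(\<Sum>i | i \<in> Gr \<and> s i < 2 ^ k * min_var n s. s i) \<le> 4 * real m * (2 ^ k * min_var n s)"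
proof -
  define \<mu> where "\<mu> = min_var n s"
  have grp_iff: "i \<in> grp n s j \<longleftrightarrow> i \<in> {1..n} \<and> 2 ^ (j - 1) * \<mu> \<le> s i \<and> s i < 2 ^ j * \<mu>" for i j
    unfolding \<mu>_def using assms(2) by (rule mem_grp_iff)
  have below: "{i \<in> Gr. s i < 2 ^ k * \<mu>} \<subseteq> (\<Union>j\<in>{1..k}. Gr \<inter> grp n s j)"
    unfolding \<mu>_def using assms by (rule admissible_reduced_below_level_subset)
  have "finite Gr"
    using admissible_reduced_subset_atLeastAtMost[OF assms(1)] finite_subset by blast
  then have fin: "finite (Gr \<inter> grp n s j)" for j
    by simp
  have nonneg: "0 \<le> s i" if "i \<in> Gr" for i
    using admissible_reduced_pos[OF assms that] by simp
  have "(\<Sum>i | i \<in> Gr \<and> s i < 2 ^ k * \<mu>. s i) \<le> sum s (\<Union>j\<in>{1..k}. Gr \<inter> grp n s j)"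
    using below nonneg \<open>finite Gr\<close> by (intro sum_mono2) auto
  also have "\<dots> = (\<Sum>j=1..k. sum s (Gr \<inter> grp n s j))"
    using fin grp_disjoint by (intro sum.UNION_disjoint) auto
  also have "\<dots> \<le> (\<Sum>j=1..k. 2 * real m * \<mu> * 2 ^ j)"
  proof (rule sum_mono)
    fix j assume "j \<in> {1..k}"
    have "sum s (Gr \<inter> grp n s j) \<le> real (card (Gr \<inter> grp n s j)) * (2 ^ j * \<mu>)"
      using grp_iff by (intro sum_bounded_above) (auto intro: less_imp_le)
    also have "\<dots> \<le> real (2 * m) * (2 ^ j * \<mu>)"
      using admissible_reduced_card_Int_grp[OF assms(1), of j] \<open>j \<in> {1..k}\<close> assms(2)
      by (intro mult_right_mono) (auto simp: \<mu>_def simp del: of_nat_mult)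
    finally show "sum s (Gr \<inter> grp n s j) \<le> 2 * real m * \<mu> * 2 ^ j"
      by (simp add: mult_ac)
  qed
  also have "\<dots> = 2 * real m * \<mu> * (\<Sum>j=1..k. 2 ^ j)"
    by (rule sum_distrib_left[symmetric])
  also have "\<dots> \<le> 2 * real m * \<mu> * 2 ^ (k + 1)"
    using assms(2) sum_power2_atLeastAtMost[of k] by (intro mult_left_mono) (auto simp: \<mu>_def)
  also have "\<dots> = 4 * real m * (2 ^ k * \<mu>)"
    by (simp add: algebra_simps)
  finally show ?thesis
    unfolding \<mu>_def .
qed

lemma sum_ge_card_Int_grp:
  assumes "0 < min_var n s" "L \<subseteq> {1..n}" "i0 \<in> grp n s j" "\<And>i. i \<in> L \<Longrightarrow> s i0 \<le> s i"
  shows "real (card (L \<inter> grp n s j)) * s i0 + real (card (L - grp n s j)) * (2 ^ j * min_var n s)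
    \<le> sum s L"
proof -
  have "finite L"
    using assms(2) finite_subset by blast
  have "2 ^ j * min_var n s \<le> s i" if "i \<in> L - grp n s j" for i
  proof -
    have "2 ^ (j - 1) * min_var n s \<le> s i"
      using assms(1,3,4) that mem_grp_iff by (meson DiffD1 order.trans)
    then show ?thesis
      using assms(1,2) that mem_grp_iff[of n s i j] by auto
  qed
  then have "real (card (L - grp n s j)) * (2 ^ j * min_var n s) \<le> sum s (L - grp n s j)"
    by (rule sum_bounded_below)
  moreover have "real (card (L \<inter> grp n s j)) * s i0 \<le> sum s (L \<inter> grp n s j)"
    using assms(4) by (intro sum_bounded_below) auto
  ultimately show ?thesis
    using sum.Int_Diff[OF \<open>finite L\<close>, of s "grp n s j"] by linarith
qed

lemma admissible_reduced_card_rest_above_level: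
  assumes adm: "admissible_reduced m n s Gr" and pos: "0 < min_var n s"
    and L: "L \<subseteq> Gr" "card L = 2 * m"
    and j: "1 \<le> j" "i0 \<in> grp n s j"
    and rest: "\<And>i. i \<in> Gr - L \<Longrightarrow> s i \<le> s i0"
  shows "card ((Gr - L) \<inter> {i. 2 ^ (j - 1) * min_var n s \<le> s i}) \<le> card (L - grp n s j)"
proof -
  let ?T = "(Gr - L) \<inter> {i. 2 ^ (j - 1) * min_var n s \<le> s i}"
  have Gr: "Gr \<subseteq> {1..n}" "finite Gr"
    using admissible_reduced_subset_atLeastAtMost[OF adm] finite_subset by auto
  then have "finite L"
    using L(1) finite_subset by blast
  have "?T \<subseteq> Gr \<inter> grp n s j"
    using Gr(1) rest j(2) mem_grp_iff[OF pos] by fastforce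
  then have "card (L \<inter> grp n s j) + card ?T \<le> card (Gr \<inter> grp n s j)"
    using L(1) Gr(2) \<open>finite L\<close> by (subst card_Un_disjoint[symmetric]) (auto intro!: card_mono)
  also have "\<dots> \<le> card L"
    using admissible_reduced_card_Int_grp[OF adm j(1)] L(2) by simp
  finally show ?thesis
    using card_Int_Diff[OF \<open>finite L\<close>, of "grp n s j"] by linarith
qed

lemma admissible_reduced_sum_rest_le:
  assumes adm: "admissible_reduced m n s Gr" and pos: "0 < min_var n s"
    and L: "L \<subseteq> Gr" "card L = 2 * m"
    and j: "1 \<le> j" "i0 \<in> grp n s j"
    and rest: "\<And>i. i \<in> Gr - L \<Longrightarrow> s i \<le> s i0"
  shows "sum s (Gr - L) \<le> real (card (L - grp n s j)) * s i0 + 4 * real m * (2 ^ (j - 1) * min_var n s)"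
proof -
  define u where "u = 2 ^ (j - 1) * min_var n s"
  define T where "T = (Gr - L) \<inter> {i. u \<le> s i}"
  have "finite Gr"
    using admissible_reduced_subset_atLeastAtMost[OF adm] finite_subset by auto
  have "u \<le> s i0"
    using j(2) by (simp add: mem_grp_iff[OF pos] u_def)
  moreover have "0 < u"
    using pos by (simp add: u_def)
  ultimately have "0 < s i0"
    by linarith
  have "sum s T \<le> real (card T) * s i0"
    using rest by (intro sum_bounded_above) (auto simp: T_def)
  also have "\<dots> \<le> real (card (L - grp n s j)) * s i0"
    using admissible_reduced_card_rest_above_level[OF adm pos L j rest] \<open>0 < s i0\<close>
    by (intro mult_right_mono) (auto simp: T_def u_def)
  finally have "sum s T \<le> real (card (L - grp n s j)) * s i0" .
  moreover have "sum s ((Gr - L) - {i. u \<le> s i}) \<le> 4 * real m * u"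
  proof -
    have "sum s ((Gr - L) - {i. u \<le> s i}) \<le> (\<Sum>i | i \<in> Gr \<and> s i < u. s i)"
      using \<open>finite Gr\<close> admissible_reduced_pos[OF adm pos] by (intro sum_mono2) (auto intro: less_imp_le)
    then show ?thesis
      using admissible_reduced_sum_below_level[OF adm pos, of "j - 1"] by (simp add: u_def)
  qed
  ultimately show ?thesis
    using sum.Int_Diff[of "Gr - L" s "{i. u \<le> s i}"] \<open>finite Gr\<close> by (simp add: T_def u_def)
qed

lemma admissible_reduced_sum_rest_le_sum:
  assumes adm: "admissible_reduced m n s Gr" and pos: "0 < min_var n s"
    and L: "L \<subseteq> Gr" "card L = 2 * m"
    and i0: "i0 \<in> L" "\<And>i. i \<in> L \<Longrightarrow> s i0 \<le> s i"
    and rest: "\<And>i. i \<in> Gr - L \<Longrightarrow> s i \<le> s i0"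
  shows "sum s (Gr - L) \<le> 2 * sum s L" "sum s (Gr - L) \<le> 6 * real m * s i0"
proof -
  have Gr: "Gr \<subseteq> {1..n}" "finite Gr"
    using admissible_reduced_subset_atLeastAtMost[OF adm] finite_subset by auto
  obtain j where j: "1 \<le> j" "i0 \<in> grp n s j"
    using admissible_reduced_subset_grps[OF adm] L(1) i0(1) by blast
  define t u a b where "t = s i0" and "u = 2 ^ (j - 1) * min_var n s"
    and "a = real (card (L \<inter> grp n s j))" and "b = real (card (L - grp n s j))"
  have two_u: "2 ^ j * min_var n s = 2 * u"
    using j(1) by (cases j) (simp_all add: u_def)
  have "u \<le> t" "t < 2 * u"
    using j(2) mem_grp_iff[OF pos] two_u by (auto simp: t_def u_def)
  have "a + b = 2 * real m"
    using card_Int_Diff[of L "grp n s j"] L Gr(2) finite_subset by (fastforce simp: a_def b_def)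
  then have "4 * real m * u = 2 * ((a + b) * u)"
    by simp
  then have m_u: "4 * real m * u = 2 * (a * u) + 2 * (b * u)"
    by (simp add: distrib_right)
  have S: "a * t + b * (2 * u) \<le> sum s L"
    using sum_ge_card_Int_grp[OF pos _ j(2) i0(2)] L(1) Gr(1) two_u by (simp add: a_def b_def t_def)
  have R: "sum s (Gr - L) \<le> b * t + 4 * real m * u"
    using admissible_reduced_sum_rest_le[OF adm pos L j rest] by (simp add: b_def t_def u_def)
  have "b * t \<le> b * (2 * u)" "a * u \<le> a * t" "b * t \<le> 2 * real m * t" "real m * u \<le> real m * t"
    using \<open>u \<le> t\<close> \<open>t < 2 * u\<close> \<open>a + b = 2 * real m\<close> pos
    by (auto intro!: mult_left_mono mult_right_mono simp: a_def b_def u_def)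
  then show "sum s (Gr - L) \<le> 2 * sum s L" "sum s (Gr - L) \<le> 6 * real m * s i0"
    using S R m_u by (simp_all add: t_def)
qed

text \<open>Only the admissibility of \<^term>\<open>Gr\<close> is used, not its entropy maximality.\<close>

theorem lemma12:
  fixes m n :: nat and s :: "nat \<Rightarrow> real" and Gr L :: "nat set"
  assumes "m \<ge> 1" and "n > 2 * m"
    and "\<And>i. i \<in> {1..n} \<Longrightarrow> s i > 0"
    and "is_Gr m n s Gr"
    and "L \<subseteq> Gr" and "card L = 2 * m"
    and "\<forall>i\<in>L. \<forall>j\<in>Gr - L. s j \<le> s i"
  shows "(\<Sum>i\<in>L. s i) / (\<Sum>j\<in>Gr. s j) \<ge> 1 / 3
    \<and> (1 - (\<Sum>i\<in>L. s i) / (\<Sum>j\<in>Gr. s j)) * ln (real m) \<le> 4 * Ent s L"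
proof -
  have adm: "admissible_reduced m n s Gr"
    using assms(4) by (simp add: is_Gr_def)
  have pos: "0 < min_var n s"
    using assms(2,3) by (intro min_var_pos) auto
  have "finite Gr"
    using admissible_reduced_subset_atLeastAtMost[OF adm] finite_subset by auto
  then have "finite L" "L \<noteq> {}"
    using assms(1,5,6) finite_subset by auto
  define i0 where "i0 = arg_min_on s L"
  have i0: "i0 \<in> L" "\<And>i. i \<in> L \<Longrightarrow> s i0 \<le> s i"
    using arg_min_if_finite[OF \<open>finite L\<close> \<open>L \<noteq> {}\<close>, of s] by (auto simp: i0_def not_less[symmetric])
  have "\<And>i. i \<in> Gr - L \<Longrightarrow> s i \<le> s i0"
    using assms(7) i0(1) by blast
  note rest = admissible_reduced_sum_rest_le_sum[OF adm pos assms(5,6) i0 this]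
  have s_pos: "\<And>i. i \<in> Gr \<Longrightarrow> 0 < s i"
    using admissible_reduced_pos[OF adm pos] .
  have "0 < sum s L"
    using \<open>finite L\<close> \<open>L \<noteq> {}\<close> s_pos assms(5) by (intro sum_pos) auto
  have "0 \<le> sum s (Gr - L)"
    using s_pos by (intro sum_nonneg) (auto intro: less_imp_le)
  have "sum s Gr = sum s L + sum s (Gr - L)"
    using sum.subset_diff[OF assms(5) \<open>finite Gr\<close>, of s] by simp
  moreover have "(1 - sum s L / (sum s L + sum s (Gr - L))) * ln (real m) \<le> 4 * Ent s L"
    using assms(1) \<open>finite L\<close> assms(6) s_pos[OF subsetD[OF assms(5) i0(1)]] i0(2)
      \<open>0 \<le> sum s (Gr - L)\<close> rest(2)
    by (rule one_minus_div_mult_ln_le_Ent)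
  moreover have "1 / 3 \<le> sum s L / (sum s L + sum s (Gr - L))"
    using rest(1) \<open>0 < sum s L\<close> \<open>0 \<le> sum s (Gr - L)\<close> by (simp add: field_simps)
  ultimately show ?thesis
    by simp
qed

end
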